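(* Let $\mathbf{A}=\langle A,\wedge,\vee,\cdot,1,0,{\sim},-,'\rangle$ be a quasi relation algebra that is $n$-periodic for some odd natural number $n$, and let $m$ be an odd natural number. (i) If $m\le n$, then $\mathbf{A}\cong\mathbf{A}^{\triangledown m}$ via the map $a\mapsto -^{n-m}a$, and $\mathbf{A}\cong\mathbf{A}^{\vartriangle m}$ via the map $a\mapsto{\sim}^{n-m}a$. (ii) If $m>n$, then $\mathbf{A}\cong\mathbf{A}^{\triangledown m}$ via the map $a\mapsto{\sim}^{m-n}a$, and $\mathbf{A}\cong\mathbf{A}^{\vartriangle m}$ via the map $a\mapsto -^{m-n}a$.
   Context: An FL-algebra $\langle A,\wedge,\vee,\cdot,1,\backslash,/,0\rangle$ is a residuated lattice (a lattice, a monoid $\langle A,\cdot,1\rangle$, with $a\cdot b\le c \iff a\le c/b\iff b\le a\backslash c$) with an arbitrary constant $0$. Define ${\sim}a=a\backslash 0$, $-a=0/a$, $a+b={\sim}(-b\cdot -a)$. It is an InFL-algebra if ${\sim}{-}a={-}{\sim}a=a$ for all $a$. A quasi relation algebra (qRA) is an InFL-algebra with a unary operation $'$ with $a''=a$, $(a\vee b)'=a'\wedge b'$, $({\sim}a)'=-(a')$, $(a\cdot b)'=a'+b'$; signature $\langle A,\wedge,\vee,\cdot,1,0,{\sim},-,'\rangle$. ${\sim}^k a$, $-^k a$ are $k$-fold applications. The qRA is $n$-periodic if $n$ is the smallest positive integer with ${\sim}^n a=-^n a$ for all $a\in A$. For $k\in\omega$, $\mathbf{A}^{\triangledown k}$ (resp.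 $\mathbf{A}^{\vartriangle k}$) is the algebra $\langle A,\wedge,\vee,\cdot,1,0,{\sim},-,{}^{\triangledown k}\rangle$ (resp. with ${}^{\vartriangle k}$), where $a^{\triangledown k}={\sim}^{2k}(a')$ and $a^{\vartriangle k}=-^{2k}(a')$; these are qRAs. *)

theory Defs
  imports Main
begin

text \<open>An algebra in the full signature of FL-algebras together with the qRA
  involution. The carrier is the whole type 'a.\<close>

record 'a flp_alg =
  meet :: "'a \<Rightarrow> 'a \<Rightarrow> 'a"
  join :: "'a \<Rightarrow> 'a \<Rightarrow> 'a"
  mult :: "'a \<Rightarrow> 'a \<Rightarrow> 'a"
  one  :: "'a"
  ldiv :: "'a \<Rightarrow> 'a \<Rightarrow> 'a"
  rdiv :: "'a \<Rightarrow> 'a \<Rightarrow> 'a"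
  zero :: "'a"
  prime :: "'a \<Rightarrow> 'a"

definition leq :: "'a flp_alg \<Rightarrow> 'a \<Rightarrow> 'a \<Rightarrow> bool" where
  "leq A a b \<longleftrightarrow> meet A a b = a"

definition tl :: "'a flp_alg \<Rightarrow> 'a \<Rightarrow> 'a" where   (* ~a = a \ 0 *)
  "tl A a = ldiv A a (zero A)"

definition mn :: "'a flp_alg \<Rightarrow> 'a \<Rightarrow> 'a" where   (* -a = 0 / a *)
  "mn A a = rdiv A (zero A) a"

definition pls :: "'a flp_alg \<Rightarrow> 'a \<Rightarrow> 'a \<Rightarrow> 'a" where
  "pls A a b = tl A (mult A (mn A b) (mn A a))"

definition FL_algebra :: "'a flp_alg \<Rightarrow> bool" where
  "FL_algebra A \<longleftrightarrow>
     (\<forall>a b c. meet A (meet A a b) c = meet A a (meet A b c)) \<and>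
     (\<forall>a b c. join A (join A a b) c = join A a (join A b c)) \<and>
     (\<forall>a b. meet A a b = meet A b a) \<and>
     (\<forall>a b. join A a b = join A b a) \<and>
     (\<forall>a b. meet A a (join A a b) = a) \<and>
     (\<forall>a b. join A a (meet A a b) = a) \<and>
     (\<forall>a b c. mult A (mult A a b) c = mult A a (mult A b c)) \<and>
     (\<forall>a. mult A (one A) a = a \<and> mult A a (one A) = a) \<and>
     (\<forall>a b c. (leq A (mult A a b) c \<longleftrightarrow> leq A a (rdiv A c b)) \<and>
              (leq A (mult A a b) c \<longleftrightarrow> leq A b (ldiv A a c)))"

definition InFL :: "'a flp_alg \<Rightarrow> bool" where
  "InFL A \<longleftrightarrow> FL_algebra A \<and> (\<forall>a. tl A (mn A a) = a \<and> mn A (tl A a) = a)"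

definition qRA :: "'a flp_alg \<Rightarrow> bool" where
  "qRA A \<longleftrightarrow> InFL A \<and>
     (\<forall>a. prime A (prime A a) = a) \<and>
     (\<forall>a b. prime A (join A a b) = meet A (prime A a) (prime A b)) \<and>
     (\<forall>a. prime A (tl A a) = mn A (prime A a)) \<and>
     (\<forall>a b. prime A (mult A a b) = pls A (prime A a) (prime A b))"

definition periodic :: "'a flp_alg \<Rightarrow> nat \<Rightarrow> bool" where
  "periodic A n \<longleftrightarrow> 0 < n \<and> (\<forall>a. (tl A ^^ n) a = (mn A ^^ n) a) \<and>
     (\<forall>k. 0 < k \<and> k < n \<longrightarrow> \<not> (\<forall>a. (tl A ^^ k) a = (mn A ^^ k) a))"

definition nabla :: "'a flp_alg \<Rightarrow> nat \<Rightarrow> 'a flp_alg" where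
  "nabla A k = A\<lparr>prime := (\<lambda>a. (tl A ^^ (2*k)) (prime A a))\<rparr>"

definition delta :: "'a flp_alg \<Rightarrow> nat \<Rightarrow> 'a flp_alg" where
  "delta A k = A\<lparr>prime := (\<lambda>a. (mn A ^^ (2*k)) (prime A a))\<rparr>"

definition qra_iso :: "'a flp_alg \<Rightarrow> 'b flp_alg \<Rightarrow> ('a \<Rightarrow> 'b) \<Rightarrow> bool" where
  "qra_iso A B f \<longleftrightarrow> bij f \<and>
     (\<forall>a b. f (meet A a b) = meet B (f a) (f b)) \<and>
     (\<forall>a b. f (join A a b) = join B (f a) (f b)) \<and>
     (\<forall>a b. f (mult A a b) = mult B (f a) (f b)) \<and>
     f (one A) = one B \<and> f (zero A) = zero B \<and>
     (\<forall>a. f (tl A a) = tl B (f a)) \<and>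
     (\<forall>a. f (mn A a) = mn B (f a)) \<and>
     (\<forall>a. f (prime A a) = prime B (f a))"

end

theory Submission
  imports Defs
begin

(* In an InFL-algebra ~ and - are mutually inverse and satisfy x <= ~a iff a <= -x, so ~~ and
   -- preserve the lattice operations, the constants and the product: every even power of ~
   or - is an automorphism of the reduct forgetting the involution '. The involution
   intertwines the two negations, (~a)' = -(a'), and n-periodicity makes ~^(2n) the identity.
   For odd m and n the shift |n - m| is even, and compatibility of the shift with the new
   involution ~^(2m)(a') (resp. -^(2m)(a')) reduces to comparing exponents of ~ modulo 2n. *)

lemma funpow_cancel:
  assumes "\<And>x. g (h x) = x"
  shows "(g ^^ (k + j)) ((h ^^ j) x) = (g ^^ k) x"
proof -
  have "(g ^^ j) ((h ^^ j) x) = x" for x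
    by (induction j arbitrary: x) (simp_all add: funpow_swap1 assms)
  then show ?thesis by (simp add: funpow_add)
qed

lemma funpow_intertwine:
  assumes "\<And>x. p (g x) = h (p x)"
  shows "p ((g ^^ k) x) = (h ^^ k) (p x)"
  by (induction k) (simp_all add: assms)

(* The abstract core of the theorem: g, h, p stand for ~, -, ' (or -, ~, '). *)
lemma funpow_twisted_commute:
  fixes g h p :: "'a \<Rightarrow> 'a"
  assumes gh: "\<And>x. g (h x) = x"
    and pg: "\<And>x. p (g x) = h (p x)" and ph: "\<And>x. p (h x) = g (p x)"
    and period: "g ^^ n = h ^^ n"
  shows "m \<le> n \<Longrightarrow> (h ^^ (n - m)) (p a) = (g ^^ (2*m)) (p ((h ^^ (n - m)) a))"
    and "n < m \<Longrightarrow> (g ^^ (m - n)) (p a) = (g ^^ (2*m)) (p ((g ^^ (m - n)) a))"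
proof -
  have g_2n: "(g ^^ (k + (n + n))) x = (g ^^ k) x" for k x
    using funpow_cancel[of g h k n x] gh by (simp add: funpow_add period)
  show "(h ^^ (n - m)) (p a) = (g ^^ (2*m)) (p ((h ^^ (n - m)) a))" if le: "m \<le> n"
  proof -
    obtain d where n: "n = m + d" using le_Suc_ex[OF le] by blast
    have "(h ^^ d) (p a) = (g ^^ ((2*m + d) + d)) ((h ^^ d) (p a))"
      using g_2n[of 0] by (simp add: n mult_2 add_ac)
    also have "\<dots> = (g ^^ (2*m + d)) (p a)"
      using gh by (rule funpow_cancel)
    also have "\<dots> = (g ^^ (2*m)) (p ((h ^^ d) a))"
      by (simp add: funpow_add funpow_intertwine ph)
    finally show ?thesis by (simp add: n)
  qed
  show "(g ^^ (m - n)) (p a) = (g ^^ (2*m)) (p ((g ^^ (m - n)) a))" if less: "n < m"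
  proof -
    obtain d where m: "m = n + d" using less_imp_add_positive[OF less] by blast
    have "(g ^^ (2*m)) (p ((g ^^ d) a)) = (g ^^ ((d + (n + n)) + d)) ((h ^^ d) (p a))"
      by (simp add: m mult_2 add_ac funpow_intertwine pg)
    also have "\<dots> = (g ^^ d) (p a)"
      using gh by (simp add: funpow_cancel g_2n)
    finally show ?thesis by (simp add: m)
  qed
qed

definition fl_aut :: "'a flp_alg \<Rightarrow> ('a \<Rightarrow> 'a) \<Rightarrow> bool" where
  "fl_aut A f \<longleftrightarrow> bij f \<and>
     (\<forall>a b. f (meet A a b) = meet A (f a) (f b)) \<and>
     (\<forall>a b. f (join A a b) = join A (f a) (f b)) \<and>
     (\<forall>a b. f (mult A a b) = mult A (f a) (f b)) \<and>
     f (one A) = one A \<and> f (zero A) = zero A \<and>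
     (\<forall>a. f (tl A a) = tl A (f a)) \<and> (\<forall>a. f (mn A a) = mn A (f a))"

lemma fl_aut_funpow: "fl_aut A f \<Longrightarrow> fl_aut A (f ^^ k)"
  by (induction k) (auto simp: fl_aut_def bij_comp)

lemma qra_iso_nabla_if_fl_aut:
  assumes "fl_aut A f" and "\<And>a. f (prime A a) = (tl A ^^ (2*m)) (prime A (f a))"
  shows "qra_iso A (nabla A m) f"
  using assms(1)[unfolded fl_aut_def] assms(2) by (simp add: qra_iso_def nabla_def tl_def mn_def)

lemma qra_iso_delta_if_fl_aut:
  assumes "fl_aut A f" and "\<And>a. f (prime A a) = (mn A ^^ (2*m)) (prime A (f a))"
  shows "qra_iso A (delta A m) f"
  using assms(1)[unfolded fl_aut_def] assms(2) by (simp add: qra_iso_def delta_def tl_def mn_def)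

locale InFL_algebra =
  fixes A :: "'a flp_alg"
  assumes InFL: "InFL A"
begin

abbreviation le (infix "\<sqsubseteq>" 50) where "a \<sqsubseteq> b \<equiv> leq A a b"

lemma meet_assoc: "meet A (meet A a b) c = meet A a (meet A b c)"
  and join_assoc: "join A (join A a b) c = join A a (join A b c)"
  and meet_comm: "meet A a b = meet A b a"
  and join_comm: "join A a b = join A b a"
  and meet_join_absorb: "meet A a (join A a b) = a"
  and join_meet_absorb: "join A a (meet A a b) = a"
  and mult_assoc: "mult A (mult A a b) c = mult A a (mult A b c)"
  and mult_one_left: "mult A (one A) a = a"
  and mult_one_right: "mult A a (one A) = a"
  and residuation_right: "mult A a b \<sqsubseteq> c \<longleftrightarrow> a \<sqsubseteq> rdiv A c b"
  and residuation_left: "mult A a b \<sqsubseteq> c \<longleftrightarrow> b \<sqsubseteq> ldiv A a c"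
  using InFL unfolding InFL_def FL_algebra_def by - metis+

lemma tl_mn [simp]: "tl A (mn A a) = a"
  and mn_tl [simp]: "mn A (tl A a) = a"
  using InFL unfolding InFL_def by - metis+

lemma meet_idem: "meet A a a = a"
  by (metis meet_join_absorb join_meet_absorb)

sublocale lat: lattice "meet A" "leq A" "\<lambda>a b. a \<sqsubseteq> b \<and> \<not> b \<sqsubseteq> a" "join A"
proof unfold_locales
  fix x y z
  show "x \<sqsubseteq> x" by (simp add: leq_def meet_idem)
  show "x \<sqsubseteq> y \<Longrightarrow> y \<sqsubseteq> z \<Longrightarrow> x \<sqsubseteq> z" by (metis leq_def meet_assoc)
  show "x \<sqsubseteq> y \<Longrightarrow> y \<sqsubseteq> x \<Longrightarrow> x = y" by (metis leq_def meet_comm)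
  show "meet A x y \<sqsubseteq> x" "meet A x y \<sqsubseteq> y"
    by (metis leq_def meet_assoc meet_comm meet_idem)+
  show "x \<sqsubseteq> y \<Longrightarrow> x \<sqsubseteq> z \<Longrightarrow> x \<sqsubseteq> meet A y z" by (metis leq_def meet_assoc)
  show "x \<sqsubseteq> join A x y" "y \<sqsubseteq> join A x y"
    by (metis leq_def meet_join_absorb join_comm)+
  have join_eq: "join A u x = x" if "u \<sqsubseteq> x" for u
    using that by (metis leq_def join_comm join_meet_absorb meet_comm)
  show "join A y z \<sqsubseteq> x" if "y \<sqsubseteq> x" "z \<sqsubseteq> x"
    using meet_join_absorb[of "join A y z" x] join_eq[OF that(1)] join_eq[OF that(2)]
    by (simp add: leq_def join_assoc)
qed simp

lemma eq_if_same_lower_bounds: "(\<And>x. x \<sqsubseteq> a \<longleftrightarrow> x \<sqsubseteq> b) \<Longrightarrow> a = b"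
  by (metis lat.order_refl lat.order.antisym)

lemma le_tl_iff: "x \<sqsubseteq> tl A a \<longleftrightarrow> mult A a x \<sqsubseteq> zero A"
  by (simp add: tl_def residuation_left)

lemma le_mn_iff: "x \<sqsubseteq> mn A a \<longleftrightarrow> mult A x a \<sqsubseteq> zero A"
  by (simp add: mn_def residuation_right)

lemma le_tl_iff_le_mn: "x \<sqsubseteq> tl A a \<longleftrightarrow> a \<sqsubseteq> mn A x"
  by (simp add: le_tl_iff le_mn_iff)

lemma tl_join: "tl A (join A a b) = meet A (tl A a) (tl A b)"
  by (rule eq_if_same_lower_bounds) (simp add: le_tl_iff_le_mn)

lemma mn_join: "mn A (join A a b) = meet A (mn A a) (mn A b)"
  by (rule eq_if_same_lower_bounds) (simp add: le_tl_iff_le_mn[symmetric])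

lemma tl_meet: "tl A (meet A a b) = join A (tl A a) (tl A b)"
  by (metis mn_join mn_tl tl_mn)

lemma mn_meet: "mn A (meet A a b) = join A (mn A a) (mn A b)"
  by (metis tl_join mn_tl tl_mn)

lemma tl_one: "tl A (one A) = zero A"
  by (rule eq_if_same_lower_bounds) (simp add: le_tl_iff mult_one_left)

lemma mn_one: "mn A (one A) = zero A"
  by (rule eq_if_same_lower_bounds) (simp add: le_mn_iff mult_one_right)

lemma tl_zero: "tl A (zero A) = one A"
  by (metis mn_one tl_mn)

lemma mn_zero: "mn A (zero A) = one A"
  by (metis tl_one mn_tl)

lemma mult_tl_tl_le_zero_iff: "mult A u (tl A (tl A v)) \<sqsubseteq> zero A \<longleftrightarrow> mult A v u \<sqsubseteq> zero A"
  by (metis le_mn_iff le_tl_iff mn_tl)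

lemma eq_if_same_left_annihilators:
  assumes "\<And>x. mult A x a \<sqsubseteq> zero A \<longleftrightarrow> mult A x b \<sqsubseteq> zero A"
  shows "a = b"
proof -
  have "mn A a = mn A b"
    by (rule eq_if_same_lower_bounds) (simp add: le_mn_iff assms)
  then show ?thesis by (metis tl_mn)
qed

lemma tl_tl_mult: "tl A (tl A (mult A a b)) = mult A (tl A (tl A a)) (tl A (tl A b))"
proof (rule eq_if_same_left_annihilators)
  fix x
  have "mult A x (mult A (tl A (tl A a)) (tl A (tl A b))) \<sqsubseteq> zero A
      \<longleftrightarrow> mult A b (mult A x (tl A (tl A a))) \<sqsubseteq> zero A"
    by (simp add: mult_tl_tl_le_zero_iff flip: mult_assoc)
  also have "\<dots> \<longleftrightarrow> mult A a (mult A b x) \<sqsubseteq> zero A"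
    by (simp add: mult_tl_tl_le_zero_iff flip: mult_assoc)
  also have "\<dots> \<longleftrightarrow> mult A x (tl A (tl A (mult A a b))) \<sqsubseteq> zero A"
    by (simp add: mult_tl_tl_le_zero_iff flip: mult_assoc)
  finally show "mult A x (tl A (tl A (mult A a b))) \<sqsubseteq> zero A
      \<longleftrightarrow> mult A x (mult A (tl A (tl A a)) (tl A (tl A b))) \<sqsubseteq> zero A"
    by simp
qed

lemma mn_mn_mult: "mn A (mn A (mult A a b)) = mult A (mn A (mn A a)) (mn A (mn A b))"
  by (metis tl_tl_mult mn_tl tl_mn)

lemma bij_tl: "bij (tl A)"
  by (rule o_bij[of "mn A"]) (simp_all add: fun_eq_iff)

lemma bij_mn: "bij (mn A)"
  by (rule o_bij[of "tl A"]) (simp_all add: fun_eq_iff)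

lemma fl_aut_tl_tl: "fl_aut A (tl A ^^ 2)"
  by (simp add: fl_aut_def numeral_2_eq_2 bij_tl bij_comp
      tl_join tl_meet tl_tl_mult tl_one tl_zero)

lemma fl_aut_mn_mn: "fl_aut A (mn A ^^ 2)"
  by (simp add: fl_aut_def numeral_2_eq_2 bij_mn bij_comp
      mn_join mn_meet mn_mn_mult mn_one mn_zero)

lemma fl_aut_tl_funpow_even: "even d \<Longrightarrow> fl_aut A (tl A ^^ d)"
  by (metis evenE fl_aut_funpow fl_aut_tl_tl funpow_mult)

lemma fl_aut_mn_funpow_even: "even d \<Longrightarrow> fl_aut A (mn A ^^ d)"
  by (metis evenE fl_aut_funpow fl_aut_mn_mn funpow_mult)

end

lemma qRA_imp_InFL_algebra: "qRA A \<Longrightarrow> InFL_algebra A"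
  by unfold_locales (simp add: qRA_def)

lemma prime_tl: "qRA A \<Longrightarrow> prime A (tl A a) = mn A (prime A a)"
  by (simp add: qRA_def)

lemma prime_mn: "qRA A \<Longrightarrow> prime A (mn A a) = tl A (prime A a)"
  by (metis prime_tl InFL_algebra.tl_mn qRA_imp_InFL_algebra)

lemma periodic_imp_funpow_eq: "periodic A n \<Longrightarrow> tl A ^^ n = mn A ^^ n"
  by (simp add: periodic_def fun_eq_iff)

theorem proposition2p6:
  fixes A :: "'a flp_alg" and n m :: nat
  assumes "qRA A" and "periodic A n" and "odd n" and "odd m"
  shows "(m \<le> n \<longrightarrow> qra_iso A (nabla A m) (mn A ^^ (n - m)) \<and>
                     qra_iso A (delta A m) (tl A ^^ (n - m))) \<and>
         (n < m \<longrightarrow> qra_iso A (nabla A m) (tl A ^^ (m - n)) \<and>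
                     qra_iso A (delta A m) (mn A ^^ (m - n)))"
proof -
  interpret InFL_algebra A using \<open>qRA A\<close> by (rule qRA_imp_InFL_algebra)
  have period: "tl A ^^ n = mn A ^^ n"
    using \<open>periodic A n\<close> by (rule periodic_imp_funpow_eq)
  have even: "even (n - m)" "even (m - n)"
    using \<open>odd n\<close> \<open>odd m\<close> by auto
  note twist_tl = funpow_twisted_commute[of "tl A" "mn A" "prime A" n m,
      OF tl_mn prime_tl[OF \<open>qRA A\<close>] prime_mn[OF \<open>qRA A\<close>] period]
  note twist_mn = funpow_twisted_commute[of "mn A" "tl A" "prime A" n m,
      OF mn_tl prime_mn[OF \<open>qRA A\<close>] prime_tl[OF \<open>qRA A\<close>] period[symmetric]]
  show ?thesis
  proof (intro conjI impI)
    assume "m \<le> n"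
    show "qra_iso A (nabla A m) (mn A ^^ (n - m))"
      using even \<open>m \<le> n\<close> by (intro qra_iso_nabla_if_fl_aut fl_aut_mn_funpow_even twist_tl)
    show "qra_iso A (delta A m) (tl A ^^ (n - m))"
      using even \<open>m \<le> n\<close> by (intro qra_iso_delta_if_fl_aut fl_aut_tl_funpow_even twist_mn)
  next
    assume "n < m"
    show "qra_iso A (nabla A m) (tl A ^^ (m - n))"
      using even \<open>n < m\<close> by (intro qra_iso_nabla_if_fl_aut fl_aut_tl_funpow_even twist_tl)
    show "qra_iso A (delta A m) (mn A ^^ (m - n))"
      using even \<open>n < m\<close> by (intro qra_iso_delta_if_fl_aut fl_aut_mn_funpow_even twist_mn)
  qed
qed

end
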